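(* Let $R$ be a $*$-ring. The following are equivalent: (1) ${\rm psr}(R)=1$ and $R$ is $*$-abelian. (2) For any $a,b\in R$ with $aR+bR=R$ there exists a projection $p$ with $pa=ap$ such that $a+bp\in U(R)$. (3) ${\rm isr}(R)=1$ and every idempotent of $R$ is a projection. (4) $R$ is clean and every idempotent of $R$ is a projection; equivalently, $R$ is exchange and every idempotent of $R$ is a projection. (5) $R$ is $*$-clean and $*$-abelian. (6) $R$ is strongly $*$-clean. (7) For every $a\in R$ there exists a projection $p\in aR$ such that $1-p\in(1-a)R$.
   Context: Rings are associative with identity. A $*$-ring is a ring with an involution $*$ ($(x+y)^*=x^*+y^*$, $(xy)^*=y^*x^*$, $(x^* )^*=x$). A projection is $p$ with $p^2=p=p^*$; $U(R)$ is the unit group. $R$ is clean if each element is a sum of an idempotent and a unit; $*$-clean if each element is a sum of a projection and a unit; strongly $*$-clean if each element is a sum of a projection and a unit that commute. $R$ is exchange if for every $a\in R$ there is an idempotent $e\in aR$ with $1-e\in(1-a)R$. $R$ is $*$-abelian if every projection is central. ${\rm isr}(R)=1$ means: whenever $aR+bR=R$, there is an idempotent $e$ with $a+be\in U(R)$. ${\rm psr}(R)=1$ means: whenever $aR+bR=R$, there is a projection $p$ with $a+bp\in U(R)$. *)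

theory Defs
  imports Main
begin

definition star_ring :: "('a::ring_1 \<Rightarrow> 'a) \<Rightarrow> bool" where
  "star_ring s \<longleftrightarrow> (\<forall>x y. s (x + y) = s x + s y) \<and> (\<forall>x y. s (x * y) = s y * s x)
     \<and> (\<forall>x. s (s x) = x)"

definition idempotent :: "'a::ring_1 \<Rightarrow> bool" where
  "idempotent e \<longleftrightarrow> e * e = e"

definition projection :: "('a::ring_1 \<Rightarrow> 'a) \<Rightarrow> 'a \<Rightarrow> bool" where
  "projection s p \<longleftrightarrow> p * p = p \<and> s p = p"

definition unit_ring :: "'a::ring_1 \<Rightarrow> bool" where
  "unit_ring u \<longleftrightarrow> (\<exists>v. u * v = 1 \<and> v * u = 1)"

definition rideal :: "'a::ring_1 \<Rightarrow> 'a set" where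
  "rideal a = {a * x | x. True}"

definition comaximal :: "'a::ring_1 \<Rightarrow> 'a \<Rightarrow> bool" where
  "comaximal a b \<longleftrightarrow> {a * x + b * y | x y. True} = UNIV"

definition clean :: "'a::ring_1 itself \<Rightarrow> bool" where
  "clean _ \<longleftrightarrow> (\<forall>a::'a. \<exists>e u. idempotent e \<and> unit_ring u \<and> a = e + u)"

definition star_clean :: "('a::ring_1 \<Rightarrow> 'a) \<Rightarrow> bool" where
  "star_clean s \<longleftrightarrow> (\<forall>a. \<exists>p u. projection s p \<and> unit_ring u \<and> a = p + u)"

definition strongly_star_clean :: "('a::ring_1 \<Rightarrow> 'a) \<Rightarrow> bool" where
  "strongly_star_clean s \<longleftrightarrow>
     (\<forall>a. \<exists>p u. projection s p \<and> unit_ring u \<and> a = p + u \<and> p * u = u * p)"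

definition exchange :: "'a::ring_1 itself \<Rightarrow> bool" where
  "exchange _ \<longleftrightarrow> (\<forall>a::'a. \<exists>e. idempotent e \<and> e \<in> rideal a \<and> 1 - e \<in> rideal (1 - a))"

definition star_abelian :: "('a::ring_1 \<Rightarrow> 'a) \<Rightarrow> bool" where
  "star_abelian s \<longleftrightarrow> (\<forall>p. projection s p \<longrightarrow> (\<forall>x. p * x = x * p))"

definition isr_one :: "'a::ring_1 itself \<Rightarrow> bool" where
  "isr_one _ \<longleftrightarrow> (\<forall>a b::'a. comaximal a b \<longrightarrow> (\<exists>e. idempotent e \<and> unit_ring (a + b * e)))"

definition psr_one :: "('a::ring_1 \<Rightarrow> 'a) \<Rightarrow> bool" where
  "psr_one s \<longleftrightarrow> (\<forall>a b. comaximal a b \<longrightarrow> (\<exists>p. projection s p \<and> unit_ring (a + b * p)))"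

definition idems_are_projections :: "('a::ring_1 \<Rightarrow> 'a) \<Rightarrow> bool" where
  "idems_are_projections s \<longleftrightarrow> (\<forall>e. idempotent e \<longrightarrow> projection s e)"

end

theory Submission imports Defs begin

text \<open>
  Strong \<open>*\<close>-cleanness forces every idempotent to be a projection, and a symmetric idempotent
  \<open>e + e x (1 - e)\<close> then forces \<open>e x (1 - e) = 0\<close>, so all idempotents are central. In such an
  abelian ring one-sided inverses are two-sided and idempotents commute with everything,
  so the commutation requirements in (2) and (6) come for free, exchange decompositions
  become clean ones, and idempotent stable range one follows by working separately in the
  corners \<open>fR\<close> and \<open>(1 - f)R\<close> cut out by an exchange idempotent \<open>f\<close>. Stable range
  conditions give (strong) \<open>*\<close>-cleanness through the comaximal pair \<open>(a - 1, 1)\<close>.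
\<close>

lemma star_ring_simps:
  assumes "star_ring s"
  shows "s 1 = 1" "s (x + y) = s x + s y" "s (x - y) = s x - s y" "s (x * y) = s y * s x"
proof -
  have add: "\<And>x y. s (x + y) = s x + s y" and mul: "\<And>x y. s (x * y) = s y * s x"
    and inv: "\<And>x. s (s x) = x" using assms unfolding star_ring_def by auto
  have "s 1 = s 1 * s (s 1)" using inv by simp
  also have "\<dots> = 1" using mul[of "s 1" 1, symmetric] inv by simp
  finally show "s 1 = 1" .
  have "s (x - y) + s y = s x" using add[of "x - y" y] by simp
  then show "s (x - y) = s x - s y" by (simp add: eq_diff_eq)
  show "s (x + y) = s x + s y" "s (x * y) = s y * s x" using add mul by auto
qed

lemma projection_imp_idempotent: "projection s p \<Longrightarrow> idempotent p"
  unfolding projection_def idempotent_def by simp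

lemma idempotent_one_minus: "idempotent e \<Longrightarrow> idempotent (1 - e)"
  unfolding idempotent_def by (simp add: algebra_simps)

lemma projection_one_minus:
  assumes "star_ring s" "projection s p"
  shows "projection s (1 - p)"
  using assms projection_imp_idempotent[OF assms(2)] idempotent_one_minus
  unfolding projection_def idempotent_def by (simp add: star_ring_simps)

lemma unit_ringE:
  assumes "unit_ring u" obtains v where "u * v = 1" "v * u = 1"
  using assms unfolding unit_ring_def by blast

lemma comaximal_minus_one_one: "comaximal (a - 1) 1"
  unfolding comaximal_def by (auto intro: exI[of _ 0])

definition abelian :: "'a::ring_1 itself \<Rightarrow> bool" where
  "abelian _ \<longleftrightarrow> (\<forall>e::'a. idempotent e \<longrightarrow> (\<forall>x. e * x = x * e))"

lemma abelianD: "abelian TYPE('a::ring_1) \<Longrightarrow> idempotent (e::'a) \<Longrightarrow> e * x = x * e"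
  unfolding abelian_def by blast

lemma idems_are_projections_corner_zero:
  fixes s :: "'a::ring_1 \<Rightarrow> 'a" and e x :: 'a
  assumes st: "star_ring s" and ip: "idems_are_projections s" and e: "idempotent e"
  shows "e * x * (1 - e) = 0"
proof -
  have ee: "e * e = e" using e unfolding idempotent_def .
  let ?n = "e * x * (1 - e)"
  have en: "e * ?n = ?n" using ee by (simp add: mult.assoc[symmetric])
  have ne: "?n * e = 0" using ee by (simp add: mult.assoc algebra_simps)
  have "(e + ?n) * (e + ?n) = e * e + e * ?n + ?n * e + ?n * ?n" by (simp add: algebra_simps)
  also have "\<dots> = e + ?n" using ee en ne by (metis add.right_neutral mult.assoc mult_zero_left)
  finally have "idempotent (e + ?n)" unfolding idempotent_def .
  then have "s (e + ?n) = e + ?n" and se: "s e = e"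
    using ip e unfolding idems_are_projections_def projection_def by blast+
  then have "?n = s ?n" using star_ring_simps(2)[OF st] by simp
  also have "\<dots> = (1 - e) * s x * e" using se by (simp add: star_ring_simps[OF st] mult.assoc)
  finally have "e * ?n = e * (1 - e) * s x * e" by (simp add: mult.assoc)
  also have "e * (1 - e) = 0" using ee by (simp add: algebra_simps)
  finally show ?thesis using en by simp
qed

lemma idems_are_projections_imp_abelian:
  fixes s :: "'a::ring_1 \<Rightarrow> 'a"
  assumes st: "star_ring s" and ip: "idems_are_projections s"
  shows "abelian TYPE('a)"
  unfolding abelian_def
proof (intro allI impI)
  fix e x :: 'a assume e: "idempotent e"
  have "e * x * (1 - e) = 0" "(1 - e) * x * (1 - (1 - e)) = 0"
    using idems_are_projections_corner_zero[OF st ip] e idempotent_one_minus by blast+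
  moreover have "e * x * (1 - e) = e * x - e * x * e" "(1 - e) * x * (1 - (1 - e)) = x * e - e * x * e"
    by (simp_all add: algebra_simps)
  ultimately show "e * x = x * e" by simp
qed

lemma idems_are_projections_imp_star_abelian:
  "star_ring s \<Longrightarrow> idems_are_projections s \<Longrightarrow> star_abelian s"
  unfolding star_abelian_def
  using idems_are_projections_imp_abelian abelianD projection_imp_idempotent by blast

lemma abelian_right_inverse_imp_unit:
  assumes ab: "abelian TYPE('a::ring_1)" and wz: "w * z = (1::'a)"
  shows "unit_ring w"
proof -
  have "idempotent (z * w)"
    unfolding idempotent_def using wz by (metis mult.assoc mult_1_left)
  then have c: "w * (z * w) = (z * w) * w" using abelianD[OF ab, of "z * w" w] by simp
  have w: "w = z * w * w" using c wz by (metis mult.assoc mult_1_left)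
  have "z * w = (z * w * w) * z" using wz by (simp add: mult.assoc)
  also have "\<dots> = 1" using w wz by simp
  finally show ?thesis unfolding unit_ring_def using wz by blast
qed

lemma abelian_exchange_imp_clean:
  assumes ab: "abelian TYPE('a::ring_1)" and ex: "exchange TYPE('a)"
  shows "clean TYPE('a)"
  unfolding clean_def
proof
  fix a :: 'a
  obtain e r t where e: "idempotent e" and er: "e = a * r" and ht: "1 - e = (1 - a) * t"
    using ex unfolding exchange_def rideal_def by blast
  define h where "h = 1 - e"
  have ee: "e * e = e" using e unfolding idempotent_def .
  have h: "idempotent h" unfolding h_def by (rule idempotent_one_minus[OF e])
  then have hh: "h * h = h" unfolding idempotent_def .
  have he: "h * e = 0" unfolding h_def using ee by (simp add: algebra_simps)
  have ch: "\<And>x. h * x = x * h" using abelianD[OF ab h] .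
  have at: "a * t = t - h" using ht unfolding h_def[symmetric] by (simp add: algebra_simps)
  define w where "w = a - h"
  have "h * (r * e) = r * (h * e)" by (metis ch mult.assoc)
  then have "w * (r * e) = a * r * e - r * (h * e)" unfolding w_def
    by (simp add: algebra_simps)
  then have we: "w * (r * e) = e" using er ee he by simp
  have "h * (t * h) = t * (h * h)" by (metis ch mult.assoc)
  then have "w * (t * h) = a * t * h - t * (h * h)" unfolding w_def
    by (simp add: algebra_simps)
  then have wh: "w * (t * h) = - h" using at hh by (simp add: algebra_simps)
  have "w * (r * e - t * h) = 1" using we wh unfolding h_def by (simp add: algebra_simps)
  then have "unit_ring w" by (rule abelian_right_inverse_imp_unit[OF ab])
  moreover have "a = h + w" unfolding w_def by simp
  ultimately show "\<exists>e u. idempotent e \<and> unit_ring u \<and> a = e + u" using h by blast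
qed

lemma exchange_comaximal_idempotent:
  assumes ex: "exchange TYPE('a::ring_1)" and xy: "a * x + b * y = (1::'a)"
  obtains f r t where "idempotent f" "f = a * x * r" "1 - f = b * y * t"
proof -
  obtain f r t where "idempotent f" "f = a * x * r" "1 - f = (1 - a * x) * t"
    using ex unfolding exchange_def rideal_def by blast
  moreover have "1 - a * x = b * y" using xy by (simp add: algebra_simps)
  ultimately show ?thesis using that by simp
qed

text \<open>
  With \<open>a x r = f\<close> and \<open>b y t = h = 1 - f\<close>, the element \<open>a\<close> is invertible in the corner
  \<open>fR\<close> and \<open>b\<close> in \<open>hR\<close>; the unit \<open>\<beta> = b h + f\<close> lets a clean decomposition of
  \<open>-\<beta>\<^sup>-\<^sup>1 a\<close> supply an idempotent \<open>g\<close> making \<open>a + b h g\<close> invertible in \<open>hR\<close> too.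
\<close>
lemma abelian_exchange_imp_isr_one:
  assumes ab: "abelian TYPE('a::ring_1)" and ex: "exchange TYPE('a)"
  shows "isr_one TYPE('a)"
  unfolding isr_one_def
proof (intro allI impI)
  fix a b :: 'a assume "comaximal a b"
  then have "1 \<in> {a * x + b * y | x y. True}" unfolding comaximal_def by simp
  then obtain x y where "a * x + b * y = 1" by auto
  then obtain f r t where f: "idempotent f" and fr: "f = a * x * r" and ht: "1 - f = b * y * t"
    by (rule exchange_comaximal_idempotent[OF ex])
  define h where "h = 1 - f"
  have h: "idempotent h" unfolding h_def by (rule idempotent_one_minus[OF f])
  have ff: "f * f = f" and hh: "h * h = h" using f h unfolding idempotent_def by auto
  have hf: "h * f = 0" and fh: "f * h = 0" unfolding h_def using ff by (simp_all add: algebra_simps)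
  have cf: "\<And>z. f * z = z * f" using abelianD[OF ab f] .
  have ch: "\<And>z. h * z = z * h" using abelianD[OF ab h] .
  define \<beta> where "\<beta> = b * h + f"
  have "\<beta> * (y * t * h + f) = b * (h * (y * t * h)) + b * (h * f) + f * (y * t * h) + f * f"
    unfolding \<beta>_def by (simp add: algebra_simps)
  also have "b * (h * (y * t * h)) = h"
    using ht hh ch[of "y * t * h"] unfolding h_def[symmetric] by (simp add: mult.assoc)
  also have "f * (y * t * h) = 0" using cf[of "y * t"] fh by (metis mult.assoc mult_zero_right)
  finally have "\<beta> * (y * t * h + f) = 1" using hf ff unfolding h_def by simp
  then have "unit_ring \<beta>" by (rule abelian_right_inverse_imp_unit[OF ab])
  then obtain \<beta>' where \<beta>: "\<beta> * \<beta>' = 1" "\<beta>' * \<beta> = 1" by (rule unit_ringE)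
  obtain g v where g: "idempotent g" and "unit_ring v" and gv: "- (\<beta>' * a) = g + v"
    using abelian_exchange_imp_clean[OF ab ex] unfolding clean_def by blast
  then obtain v' where v: "v * v' = 1" "v' * v = 1" by (blast elim: unit_ringE)
  have gg: "g * g = g" using g unfolding idempotent_def .
  have cg: "\<And>z. g * z = z * g" using abelianD[OF ab g] .
  define u where "u = - (\<beta> * v)"
  define u' where "u' = - (v' * \<beta>')"
  have uu: "u * u' = 1" unfolding u_def u'_def using v \<beta>
    by (simp add: mult.assoc) (simp add: mult.assoc[symmetric])
  have "\<beta> * (\<beta>' * a) = a" using \<beta> by (simp add: mult.assoc[symmetric])
  then have "- a = \<beta> * g + \<beta> * v"
    using arg_cong[OF gv, of "\<lambda>z. \<beta> * z"] by (simp add: algebra_simps)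
  then have ag: "a + \<beta> * g = u" unfolding u_def
    by (metis add.commute add_diff_cancel_left' diff_minus_eq_add minus_add_distrib)
  define e where "e = h * g"
  have e: "idempotent e"
    unfolding idempotent_def e_def using hh gg cg[of h] by (metis mult.assoc)
  have hgf: "h * g * f = 0" using cg[of f] hf by (metis mult.assoc mult_zero_left)
  have fgh: "f * g * h = 0" using cg[of f] fh by (metis mult.assoc mult_zero_right)
  have hgh: "h * g * h = h * g" using cg[of h] hh by (metis mult.assoc)
  have zf: "(a + b * e) * f = a * f" unfolding e_def using hgf by (simp add: algebra_simps mult.assoc)
  have "(a + b * e) * h = (a + \<beta> * g) * h"
    unfolding e_def \<beta>_def using hgh fgh by (simp add: algebra_simps mult.assoc)
  then have zh: "(a + b * e) * h = u * h" using ag by simp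
  have "(a + b * e) * (f * (x * r)) = f"
    using zf cf[of "x * r"] fr ff by (metis mult.assoc)
  moreover have "(a + b * e) * (h * u') = h"
    using zh ch[of u] uu by (metis mult.assoc mult_1_right)
  ultimately have "(a + b * e) * (f * (x * r) + h * u') = 1"
    unfolding h_def by (simp add: algebra_simps)
  then have "unit_ring (a + b * e)" by (rule abelian_right_inverse_imp_unit[OF ab])
  with e show "\<exists>e. idempotent e \<and> unit_ring (a + b * e)" by blast
qed

definition commuting_psr_one :: "('a::ring_1 \<Rightarrow> 'a) \<Rightarrow> bool" where
  "commuting_psr_one s \<longleftrightarrow> (\<forall>a b. comaximal a b \<longrightarrow>
     (\<exists>p. projection s p \<and> p * a = a * p \<and> unit_ring (a + b * p)))"

definition projection_exchange :: "('a::ring_1 \<Rightarrow> 'a) \<Rightarrow> bool" where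
  "projection_exchange s \<longleftrightarrow> (\<forall>a. \<exists>p. projection s p \<and> p \<in> rideal a \<and> 1 - p \<in> rideal (1 - a))"

lemma strongly_star_clean_imp_idems_are_projections:
  fixes s :: "'a::ring_1 \<Rightarrow> 'a"
  assumes st: "star_ring s" and ssc: "strongly_star_clean s"
  shows "idems_are_projections s"
  unfolding idems_are_projections_def
proof (intro allI impI)
  fix a :: 'a assume a: "idempotent a"
  obtain p u where p: "projection s p" and "unit_ring u" and apu: "a = p + u" and pu: "p * u = u * p"
    using ssc unfolding strongly_star_clean_def by blast
  then obtain v where uv: "u * v = 1" by (blast elim: unit_ringE)
  have pp: "p * p = p" using p unfolding projection_def by simp
  have aa: "a * a = a" using a unfolding idempotent_def .
  have ap: "a * p = p * a" using apu pu by (simp add: algebra_simps pp)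
  have "(1 - a - p) * u = 0" using apu aa pp ap by (simp add: algebra_simps)
  then have "(1 - a - p) * u * v = 0" by simp
  then have "a = 1 - p" using uv by (simp add: mult.assoc algebra_simps)
  then show "projection s a" using projection_one_minus[OF st p] by simp
qed

lemma strongly_star_clean_imp_projection_exchange:
  fixes s :: "'a::ring_1 \<Rightarrow> 'a"
  assumes st: "star_ring s" and ssc: "strongly_star_clean s"
  shows "projection_exchange s"
  unfolding projection_exchange_def
proof
  fix a
  obtain p u where p: "projection s p" and "unit_ring u" and apu: "a = p + u" and pu: "p * u = u * p"
    using ssc unfolding strongly_star_clean_def by blast
  then obtain v where uv: "u * v = 1" by (blast elim: unit_ringE)
  have pp: "p * p = p" using p unfolding projection_def by simp
  have "a * ((1 - p) * v) = (p + u) * (1 - p) * v" using apu by (simp add: mult.assoc)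
  also have "(p + u) * (1 - p) = (1 - p) * u" using pp pu by (simp add: algebra_simps)
  also have "(1 - p) * u * v = 1 - p" using uv by (simp add: mult.assoc)
  finally have "1 - p = a * ((1 - p) * v)" by simp
  then have left: "1 - p \<in> rideal a" unfolding rideal_def by blast
  have "(1 - a) * (p * v) = (1 - (p + u)) * p * v" using apu by (simp add: mult.assoc)
  also have "(1 - (p + u)) * p = - (p * u)" using pp pu by (simp add: algebra_simps)
  also have "- (p * u) * v = - p" using uv by (simp add: mult.assoc)
  finally have "1 - (1 - p) = (1 - a) * (- (p * v))" by simp
  then have "1 - (1 - p) \<in> rideal (1 - a)" unfolding rideal_def by blast
  with left show "\<exists>q. projection s q \<and> q \<in> rideal a \<and> 1 - q \<in> rideal (1 - a)"
    using projection_one_minus[OF st p] by blast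
qed

text \<open>An idempotent \<open>e\<close> with \<open>p \<in> eR\<close> and \<open>1 - p \<in> (1 - e)R\<close> satisfies \<open>e p = p\<close> and \<open>e (1 - p) = 0\<close>.\<close>
lemma projection_exchange_imp_idems_are_projections:
  fixes s :: "'a::ring_1 \<Rightarrow> 'a"
  assumes pe: "projection_exchange s"
  shows "idems_are_projections s"
  unfolding idems_are_projections_def
proof (intro allI impI)
  fix e :: 'a assume e: "idempotent e"
  obtain p r t where p: "projection s p" and pr: "p = e * r" and pt: "1 - p = (1 - e) * t"
    using pe unfolding projection_exchange_def rideal_def by blast
  have ee: "e * e = e" using e unfolding idempotent_def .
  have "e * p = p" unfolding pr using ee by (simp add: mult.assoc[symmetric])
  moreover have "e * (1 - p) = (e - e * e) * t" unfolding pt by (simp add: algebra_simps)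
  then have "e * (1 - p) = 0" using ee by simp
  ultimately have "e = p" by (simp add: algebra_simps)
  then show "projection s e" using p by simp
qed

lemma projection_exchange_iff:
  "projection_exchange s \<longleftrightarrow> exchange TYPE('a::ring_1) \<and> idems_are_projections (s :: 'a \<Rightarrow> 'a)"
  using projection_exchange_imp_idems_are_projections projection_imp_idempotent
  unfolding projection_exchange_def exchange_def idems_are_projections_def by metis

lemma clean_imp_strongly_star_clean:
  assumes st: "star_ring s" and cl: "clean TYPE('a::ring_1)" and ip: "idems_are_projections (s :: 'a \<Rightarrow> 'a)"
  shows "strongly_star_clean s"
  using cl abelianD[OF idems_are_projections_imp_abelian[OF st ip]] ip
  unfolding clean_def strongly_star_clean_def idems_are_projections_def by metis

lemma isr_one_imp_commuting_psr_one:
  assumes st: "star_ring s" and isr: "isr_one TYPE('a::ring_1)" and ip: "idems_are_projections (s :: 'a \<Rightarrow> 'a)"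
  shows "commuting_psr_one s"
  using isr abelianD[OF idems_are_projections_imp_abelian[OF st ip]] ip
  unfolding isr_one_def commuting_psr_one_def idems_are_projections_def by metis

lemma unit_shift_imp_star_clean_decomposition:
  assumes "star_ring s" "projection s p" "unit_ring (a - 1 + p)"
  shows "\<exists>q u. projection s q \<and> unit_ring u \<and> a = q + u \<and> (p * a = a * p \<longrightarrow> q * u = u * q)"
proof -
  have "a = (1 - p) + (a - 1 + p)" by simp
  moreover have "p * a = a * p \<Longrightarrow> (1 - p) * (a - 1 + p) = (a - 1 + p) * (1 - p)"
    using assms(2) unfolding projection_def by (simp add: algebra_simps)
  ultimately show ?thesis using assms projection_one_minus by blast
qed

lemma psr_one_imp_star_clean:
  assumes "star_ring s" "psr_one s"
  shows "star_clean s"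
  using assms unit_shift_imp_star_clean_decomposition comaximal_minus_one_one
  unfolding psr_one_def star_clean_def by (metis mult_1_left)

lemma commuting_psr_one_imp_strongly_star_clean:
  assumes "star_ring s" "commuting_psr_one s"
  shows "strongly_star_clean s"
  unfolding strongly_star_clean_def
proof
  fix a
  obtain p where "projection s p" "p * (a - 1) = (a - 1) * p" "unit_ring (a - 1 + p)"
    using assms(2) comaximal_minus_one_one[of a] unfolding commuting_psr_one_def by fastforce
  moreover have "p * a = a * p" using \<open>p * (a - 1) = (a - 1) * p\<close> by (simp add: algebra_simps)
  ultimately show "\<exists>p u. projection s p \<and> unit_ring u \<and> a = p + u \<and> p * u = u * p"
    using unit_shift_imp_star_clean_decomposition[OF assms(1)] by blast
qed

theorem theorem4p5:
  fixes s :: "'a::ring_1 \<Rightarrow> 'a"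
  assumes "star_ring s"
  shows "(psr_one s \<and> star_abelian s)
           = (\<forall>a b. comaximal a b \<longrightarrow>
                (\<exists>p. projection s p \<and> p * a = a * p \<and> unit_ring (a + b * p)))
       \<and> (\<forall>a b. comaximal a b \<longrightarrow>
                (\<exists>p. projection s p \<and> p * a = a * p \<and> unit_ring (a + b * p)))
           = (isr_one TYPE('a) \<and> idems_are_projections s)
       \<and> (isr_one TYPE('a) \<and> idems_are_projections s)
           = (clean TYPE('a) \<and> idems_are_projections s)
       \<and> (clean TYPE('a) \<and> idems_are_projections s)
           = (exchange TYPE('a) \<and> idems_are_projections s)
       \<and> (exchange TYPE('a) \<and> idems_are_projections s)
           = (star_clean s \<and> star_abelian s)
       \<and> (star_clean s \<and> star_abelian s) = strongly_star_clean s
       \<and> strongly_star_clean s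
           = (\<forall>a. \<exists>p. projection s p \<and> p \<in> rideal a \<and> 1 - p \<in> rideal (1 - a))"
proof -
  note abelian = idems_are_projections_imp_abelian[OF assms]
  have "psr_one s \<and> star_abelian s \<Longrightarrow> star_clean s \<and> star_abelian s"
    using psr_one_imp_star_clean[OF assms] by blast
  moreover have "star_clean s \<and> star_abelian s \<Longrightarrow> strongly_star_clean s"
    unfolding star_clean_def strongly_star_clean_def star_abelian_def by metis
  moreover have "strongly_star_clean s \<Longrightarrow> projection_exchange s"
    by (rule strongly_star_clean_imp_projection_exchange[OF assms])
  moreover have "projection_exchange s \<longleftrightarrow> exchange TYPE('a) \<and> idems_are_projections s"
    by (rule projection_exchange_iff)
  moreover have "exchange TYPE('a) \<and> idems_are_projections s \<Longrightarrow> clean TYPE('a) \<and> isr_one TYPE('a)"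
    using abelian_exchange_imp_clean abelian_exchange_imp_isr_one abelian by blast
  moreover have "clean TYPE('a) \<and> idems_are_projections s \<Longrightarrow> strongly_star_clean s"
    using clean_imp_strongly_star_clean[OF assms] by blast
  moreover have "isr_one TYPE('a) \<and> idems_are_projections s \<Longrightarrow> commuting_psr_one s"
    using isr_one_imp_commuting_psr_one[OF assms] by blast
  moreover have "commuting_psr_one s \<Longrightarrow> strongly_star_clean s \<and> psr_one s"
    using commuting_psr_one_imp_strongly_star_clean[OF assms]
    unfolding commuting_psr_one_def psr_one_def by blast
  moreover have "strongly_star_clean s \<Longrightarrow> star_clean s \<and> star_abelian s"
    using strongly_star_clean_imp_idems_are_projections[OF assms]
      idems_are_projections_imp_star_abelian[OF assms]
    unfolding star_clean_def strongly_star_clean_def by blast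
  ultimately show ?thesis unfolding commuting_psr_one_def projection_exchange_def by blast
qed

end
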